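(* Let $F$ be a minimally unsatisfiable clause-set and $F',F''\in\mathrm{sDP}(F)$. Then $n(F')=n(F'')$.
   Context: Literals are variables $v$ and complements $\overline{v}$; a clause is a finite set of literals with no complementary pair; a clause-set is a finite set of clauses; $n(F)$ is the number of variables occurring in $F$; $\mathrm{ldeg}_F(x)$ is the number of clauses of $F$ containing literal $x$. $\mathrm{DP}_v(F) := \{C \in F : v \notin \mathrm{var}(C)\} \cup \{(C \cup D)\setminus\{v,\overline{v}\} : C, D \in F,\ C \cap \overline{D} = \{v\}\}$. A variable $v$ is singular for $F$ if $\min(\mathrm{ldeg}_F(v),\mathrm{ldeg}_F(\overline{v}))=1$; $F$ is nonsingular if it has none. A singular DP-reduction step is $F\leadsto\mathrm{DP}_v(F)$ for minimally unsatisfiable $F$ and $v$ singular for $F$. $\mathrm{sDP}(F)$ is the set of nonsingular minimally unsatisfiable clause-sets obtainable from $F$ by zero or more singular DP-reduction steps. *)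

theory Defs
  imports Main
begin

datatype 'v lit = Pos 'v | Neg 'v

fun var :: "'v lit \<Rightarrow> 'v" where
  "var (Pos v) = v" | "var (Neg v) = v"

fun comp :: "'v lit \<Rightarrow> 'v lit" where
  "comp (Pos v) = Neg v" | "comp (Neg v) = Pos v"

type_synonym 'v clause = "'v lit set"
type_synonym 'v cls = "'v clause set"

definition clause :: "'v clause \<Rightarrow> bool" where
  "clause C \<longleftrightarrow> finite C \<and> (\<forall>x\<in>C. comp x \<notin> C)"

definition clause_set :: "'v cls \<Rightarrow> bool" where
  "clause_set F \<longleftrightarrow> finite F \<and> (\<forall>C\<in>F. clause C)"

definition vars_cl :: "'v clause \<Rightarrow> 'v set" where
  "vars_cl C = var ` C"

definition vars :: "'v cls \<Rightarrow> 'v set" where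
  "vars F = (\<Union>C\<in>F. vars_cl C)"

definition nvars :: "'v cls \<Rightarrow> nat" where
  "nvars F = card (vars F)"

definition ldeg :: "'v cls \<Rightarrow> 'v lit \<Rightarrow> nat" where
  "ldeg F x = card {C \<in> F. x \<in> C}"

fun lit_true :: "('v \<Rightarrow> bool) \<Rightarrow> 'v lit \<Rightarrow> bool" where
  "lit_true a (Pos v) = a v" | "lit_true a (Neg v) = (\<not> a v)"

definition satisfiable :: "'v cls \<Rightarrow> bool" where
  "satisfiable F \<longleftrightarrow> (\<exists>a. \<forall>C\<in>F. \<exists>x\<in>C. lit_true a x)"

definition min_unsat :: "'v cls \<Rightarrow> bool" where
  "min_unsat F \<longleftrightarrow> clause_set F \<and> \<not> satisfiable F \<and> (\<forall>G. G \<subset> F \<longrightarrow> satisfiable G)"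

definition DP :: "'v \<Rightarrow> 'v cls \<Rightarrow> 'v cls" where
  "DP v F = {C \<in> F. v \<notin> vars_cl C}
     \<union> {(C \<union> D) - {Pos v, Neg v} | C D. C \<in> F \<and> D \<in> F \<and> C \<inter> comp ` D = {Pos v}}"

definition singular :: "'v cls \<Rightarrow> 'v \<Rightarrow> bool" where
  "singular F v \<longleftrightarrow> v \<in> vars F \<and> min (ldeg F (Pos v)) (ldeg F (Neg v)) = 1"

definition nonsingular :: "'v cls \<Rightarrow> bool" where
  "nonsingular F \<longleftrightarrow> (\<forall>v. \<not> singular F v)"

definition sDP_step :: "'v cls \<Rightarrow> 'v cls \<Rightarrow> bool" where
  "sDP_step F G \<longleftrightarrow> min_unsat F \<and> (\<exists>v. singular F v \<and> G = DP v F)"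

definition sDP :: "'v cls \<Rightarrow> 'v cls set" where
  "sDP F = {G. sDP_step\<^sup>*\<^sup>* F G \<and> nonsingular G \<and> min_unsat G}"

end

theory Submission
  imports Defs
begin

text \<open>
  A singular DP-step on a minimally unsatisfiable clause-set F eliminates a variable v whose
  literal x occurs in exactly one clause C0; it replaces every clause containing the complement
  of x by its resolvent with C0, and the result is again minimally unsatisfiable with exactly
  one variable fewer. So n(F') = n(F) minus the length of the reduction, and a Newman-style
  induction on n(F) reduces the claim to a local one about two steps on v and w.
  If v and w have singular literals in different clauses, the two steps commute and both
  remain singular after the other, giving a common reduct. Otherwise all singular literals of
  v and w lie in one clause C0: then either both reducts are nonsingular (each with n(F) - 1
  variables), or some reduct has a new singular variable u, whose singular literal lies outside
  C0 and already occurs once in F; the step on u then commutes with both v and w.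
\<close>

lemma comp_comp [simp]: "comp (comp l) = l"
  by (cases l) auto

lemma var_comp [simp]: "var (comp l) = var l"
  by (cases l) auto

lemma lit_true_comp [simp]: "lit_true a (comp l) \<longleftrightarrow> \<not> lit_true a l"
  by (cases l) auto

lemma lit_true_fun_upd [simp]: "var l \<noteq> v \<Longrightarrow> lit_true (a(v := b)) l = lit_true a l"
  by (cases l) auto

lemma var_eq_var_cases: "var m = var l \<Longrightarrow> m = l \<or> m = comp l"
  by (cases l; cases m) auto

lemma mem_vars: "t \<in> vars F \<longleftrightarrow> (\<exists>C\<in>F. \<exists>m\<in>C. var m = t)"
  by (auto simp: vars_def vars_cl_def)

lemma finite_vars: "clause_set F \<Longrightarrow> finite (vars F)"
  by (auto simp: clause_set_def clause_def vars_def vars_cl_def)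

lemma clause_comp_notin: "clause C \<Longrightarrow> l \<in> C \<Longrightarrow> comp l \<notin> C"
  by (simp add: clause_def)

lemma ldeg_pos_iff: "finite F \<Longrightarrow> 0 < ldeg F l \<longleftrightarrow> (\<exists>C\<in>F. l \<in> C)"
  by (auto simp: ldeg_def card_gt_0_iff)

lemma satisfiable_set_literal:
  assumes "\<And>C. C \<in> F \<Longrightarrow> y \<notin> C \<Longrightarrow> \<exists>m\<in>C. var m \<noteq> var y \<and> lit_true a m"
  shows "satisfiable F"
proof -
  obtain b where b: "lit_true (a(var y := b)) y"
    by (cases y) auto
  have "\<exists>m\<in>C. lit_true (a(var y := b)) m" if C: "C \<in> F" for C
  proof (cases "y \<in> C")
    case True
    with b show ?thesis by blast
  next
    case False
    then obtain m where "m \<in> C" "var m \<noteq> var y" "lit_true a m"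
      using assms[OF C] by blast
    then show ?thesis
      by (metis lit_true_fun_upd)
  qed
  then show ?thesis
    unfolding satisfiable_def by blast
qed

lemma min_unsat_finite: "min_unsat F \<Longrightarrow> finite F"
  by (simp add: min_unsat_def clause_set_def)

lemma min_unsat_clause: "min_unsat F \<Longrightarrow> C \<in> F \<Longrightarrow> clause C"
  by (simp add: min_unsat_def clause_set_def)

lemma min_unsat_remove_clause:
  assumes "min_unsat F" "E \<in> F"
  obtains a where "\<forall>C\<in>F - {E}. \<exists>m\<in>C. lit_true a m"
proof -
  have "F - {E} \<subset> F"
    using assms(2) by auto
  with assms(1) have "satisfiable (F - {E})"
    unfolding min_unsat_def by blast
  with that show ?thesis
    unfolding satisfiable_def by blast
qed

lemma min_unsat_remove_clause_falsifies:
  assumes mu: "min_unsat F" and "E \<in> F" and a: "\<forall>C\<in>F - {E}. \<exists>m\<in>C. lit_true a m"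
    and "m \<in> E"
  shows "\<not> lit_true a m"
proof
  assume "lit_true a m"
  with a \<open>m \<in> E\<close> have "\<forall>C\<in>F. \<exists>m\<in>C. lit_true a m"
    by blast
  with mu show False
    unfolding min_unsat_def satisfiable_def by blast
qed

lemma min_unsat_literal_occurs:
  assumes mu: "min_unsat F" and "var l \<in> vars F"
  shows "\<exists>C\<in>F. l \<in> C"
proof (rule ccontr)
  assume no_l: "\<not> (\<exists>C\<in>F. l \<in> C)"
  obtain E m where E: "E \<in> F" "m \<in> E" "var m = var l"
    using assms(2) unfolding mem_vars by blast
  with no_l have comp_l: "comp l \<in> E"
    using var_eq_var_cases by blast
  obtain a where a: "\<forall>C\<in>F - {E}. \<exists>m\<in>C. lit_true a m"
    using min_unsat_remove_clause[OF mu E(1)] .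
  have "satisfiable F"
  proof (rule satisfiable_set_literal[of F "comp l"])
    fix C assume C: "C \<in> F" "comp l \<notin> C"
    then obtain n where "n \<in> C" "lit_true a n"
      using a comp_l by blast
    moreover have "var n \<noteq> var l"
      using C no_l \<open>n \<in> C\<close> var_eq_var_cases by blast
    ultimately show "\<exists>n\<in>C. var n \<noteq> var (comp l) \<and> lit_true a n"
      by auto
  qed
  with mu show False
    by (simp add: min_unsat_def)
qed

lemma singular_iff:
  assumes mu: "min_unsat F"
  shows "singular F u \<longleftrightarrow> (\<exists>l. var l = u \<and> ldeg F l = 1)"
proof
  assume "singular F u"
  then have "ldeg F (Pos u) = 1 \<or> ldeg F (Neg u) = 1"
    unfolding singular_def by linarith
  then show "\<exists>l. var l = u \<and> ldeg F l = 1"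
    by (metis var.simps)
next
  assume "\<exists>l. var l = u \<and> ldeg F l = 1"
  then obtain l where l: "var l = u" "ldeg F l = 1"
    by blast
  have fin: "finite F"
    using min_unsat_finite[OF mu] .
  then have "u \<in> vars F"
    using l ldeg_pos_iff[OF fin, of l] unfolding mem_vars by auto
  then have "0 < ldeg F (Pos u)" "0 < ldeg F (Neg u)"
    using min_unsat_literal_occurs[OF mu, of "Pos u"] min_unsat_literal_occurs[OF mu, of "Neg u"]
      ldeg_pos_iff[OF fin] by auto
  moreover have "ldeg F (Pos u) = 1 \<or> ldeg F (Neg u) = 1"
    using l by (cases l) auto
  ultimately have "min (ldeg F (Pos u)) (ldeg F (Neg u)) = 1"
    by (auto simp: min_def)
  with \<open>u \<in> vars F\<close> show "singular F u"
    unfolding singular_def by blast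
qed

section \<open>Singular DP-reduction as resolution with a single clause\<close>

lemma DP_memE:
  assumes "Y \<in> DP v F"
  obtains "Y \<in> F" "v \<notin> vars_cl Y"
    | C D where "C \<in> F" "D \<in> F" "Pos v \<in> C" "Neg v \<in> D" "Y = (C \<union> D) - {Pos v, Neg v}"
proof -
  consider "Y \<in> F" "v \<notin> vars_cl Y"
    | C D where "C \<in> F" "D \<in> F" "C \<inter> comp ` D = {Pos v}" "Y = (C \<union> D) - {Pos v, Neg v}"
    using assms unfolding DP_def by blast
  then show ?thesis
  proof cases
    case 1
    with that(1) show ?thesis .
  next
    case (2 C D)
    then have "Pos v \<in> C" "Pos v \<in> comp ` D"
      by blast+
    then obtain d where "d \<in> D" "Pos v = comp d"
      by blast
    then have "Neg v \<in> D"
      by (cases d) auto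
    with 2 \<open>Pos v \<in> C\<close> that(2) show ?thesis
      by blast
  qed
qed

lemma resolvent_in_DP:
  assumes "C \<in> F" "D \<in> F" "y \<in> C" "comp y \<in> D" and clash: "\<And>l. l \<in> C \<Longrightarrow> comp l \<in> D \<Longrightarrow> l = y"
  shows "(C \<union> D) - {y, comp y} \<in> DP (var y) F"
proof (cases y)
  case (Pos v)
  have "C \<inter> comp ` D \<subseteq> {Pos v}"
    using clash Pos by auto
  moreover have "Pos v \<in> C \<inter> comp ` D"
    using assms(3,4) Pos image_eqI[of "Pos v" comp "Neg v" D] by simp
  ultimately have "C \<inter> comp ` D = {Pos v}"
    by blast
  with assms(1,2) Pos show ?thesis
    unfolding DP_def by auto
next
  case (Neg v)
  have "D \<inter> comp ` C \<subseteq> {Pos v}"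
  proof
    fix e assume "e \<in> D \<inter> comp ` C"
    then obtain l where "l \<in> C" "comp l \<in> D" "e = comp l"
      by auto
    with clash[of l] Neg show "e \<in> {Pos v}"
      by simp
  qed
  moreover have "Pos v \<in> D \<inter> comp ` C"
    using assms(3,4) Neg image_eqI[of "Pos v" comp "Neg v" C] by simp
  ultimately have "D \<inter> comp ` C = {Pos v}"
    by blast
  moreover have "(C \<union> D) - {y, comp y} = (D \<union> C) - {Pos v, Neg v}"
    using Neg by auto
  ultimately show ?thesis
    using assms(1,2) Neg unfolding DP_def by auto
qed

definition resolve_with :: "'v lit \<Rightarrow> 'v clause \<Rightarrow> 'v clause \<Rightarrow> 'v clause" where
  "resolve_with x C0 E = (if comp x \<in> E then E - {comp x} \<union> (C0 - {x}) else E)"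

lemma resolve_with_subset: "resolve_with x C0 E \<subseteq> E - {comp x} \<union> (C0 - {x})"
  by (auto simp: resolve_with_def)

lemma Diff_comp_subset_resolve_with: "E - {comp x} \<subseteq> resolve_with x C0 E"
  by (auto simp: resolve_with_def)

lemma resolve_with_true:
  assumes "\<exists>l\<in>C0. lit_true a l" "\<exists>m\<in>E. lit_true a m"
  shows "\<exists>m\<in>resolve_with x C0 E. lit_true a m"
proof -
  obtain m where m: "m \<in> E" "lit_true a m"
    using assms(2) by blast
  show ?thesis
  proof (cases "m = comp x")
    case True
    obtain l where "l \<in> C0" "lit_true a l"
      using assms(1) by blast
    moreover from True m have "l \<noteq> x" "comp x \<in> E"
      using \<open>lit_true a l\<close> by auto
    ultimately show ?thesis
      by (auto simp: resolve_with_def)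
  next
    case False
    with m Diff_comp_subset_resolve_with show ?thesis
      by blast
  qed
qed

locale singular_literal =
  fixes F :: "'v cls" and x :: "'v lit" and C0 :: "'v clause"
  assumes mu: "min_unsat F" and C0_in: "C0 \<in> F" and x_in_C0: "x \<in> C0" and ldeg_x: "ldeg F x = 1"
begin

lemma clause_with_x: "E \<in> F \<Longrightarrow> x \<in> E \<Longrightarrow> E = C0"
proof -
  assume "E \<in> F" "x \<in> E"
  have "card {C \<in> F. x \<in> C} = 1"
    using ldeg_x by (simp add: ldeg_def)
  then obtain c where c: "{C \<in> F. x \<in> C} = {c}"
    by (rule card_1_singletonE)
  have "E \<in> {C \<in> F. x \<in> C}" "C0 \<in> {C \<in> F. x \<in> C}"
    using \<open>E \<in> F\<close> \<open>x \<in> E\<close> C0_in x_in_C0 by simp_all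
  with c show "E = C0"
    by simp
qed

lemma comp_x_notin_C0: "comp x \<notin> C0"
  using clause_comp_notin[OF min_unsat_clause[OF mu C0_in] x_in_C0] .

lemma comp_x_occurs: "\<exists>D\<in>F. comp x \<in> D"
  using min_unsat_literal_occurs[OF mu, of "comp x"] C0_in x_in_C0 unfolding mem_vars by auto

lemma var_neq_x:
  assumes "E \<in> F" "E \<noteq> C0" "m \<in> E" "m \<noteq> comp x"
  shows "var m \<noteq> var x"
  using assms clause_with_x var_eq_var_cases by blast

lemma var_neq_x_in_C0: "m \<in> C0 \<Longrightarrow> m \<noteq> x \<Longrightarrow> var m \<noteq> var x"
  using comp_x_notin_C0 var_eq_var_cases by blast

text \<open>Otherwise making \<open>comp x\<close> true would satisfy F.\<close>

lemma C0_rest_false: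
  assumes a: "\<And>C. C \<in> F \<Longrightarrow> C \<noteq> C0 \<Longrightarrow> comp x \<notin> C \<Longrightarrow> \<exists>m\<in>C. lit_true a m"
    and l: "l \<in> C0" "l \<noteq> x"
  shows "\<not> lit_true a l"
proof
  assume "lit_true a l"
  have "satisfiable F"
  proof (rule satisfiable_set_literal[of F "comp x" a])
    fix C assume C: "C \<in> F" "comp x \<notin> C"
    show "\<exists>m\<in>C. var m \<noteq> var (comp x) \<and> lit_true a m"
    proof (cases "C = C0")
      case True
      with l \<open>lit_true a l\<close> var_neq_x_in_C0 show ?thesis
        by auto
    next
      case False
      with a C obtain m where "m \<in> C" "lit_true a m"
        by blast
      with C False var_neq_x show ?thesis
        by fastforce
    qed
  qed
  with mu show False
    by (simp add: min_unsat_def)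
qed

lemma no_clash:
  assumes D: "D \<in> F" "comp x \<in> D" and l: "l \<in> C0" "l \<noteq> x"
  shows "comp l \<notin> D"
proof
  assume "comp l \<in> D"
  obtain a where a: "\<forall>C\<in>F - {D}. \<exists>m\<in>C. lit_true a m"
    using min_unsat_remove_clause[OF mu D(1)] .
  have "\<not> lit_true a (comp l)"
    using min_unsat_remove_clause_falsifies[OF mu D(1) a \<open>comp l \<in> D\<close>] .
  moreover have "\<not> lit_true a l"
  proof (rule C0_rest_false[OF _ l])
    fix C assume "C \<in> F" "C \<noteq> C0" "comp x \<notin> C"
    with a D(2) show "\<exists>m\<in>C. lit_true a m"
      by blast
  qed
  ultimately show False
    by simp
qed

lemma clause_resolve_with:
  assumes E: "E \<in> F"
  shows "clause (resolve_with x C0 E)"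
proof (cases "comp x \<in> E")
  case False
  then show ?thesis
    using min_unsat_clause[OF mu E] by (simp add: resolve_with_def)
next
  case True
  have cE: "clause E" and cC0: "clause C0"
    using min_unsat_clause[OF mu] E C0_in by auto
  have "comp l \<notin> E - {comp x} \<union> (C0 - {x})" if "l \<in> E - {comp x} \<union> (C0 - {x})" for l
    using that clause_comp_notin[OF cE] clause_comp_notin[OF cC0]
      no_clash[OF E True, of l] no_clash[OF E True, of "comp l"] by auto
  with cE cC0 True show ?thesis
    by (auto simp: resolve_with_def clause_def)
qed

lemma DP_eq_image: "DP (var x) F = resolve_with x C0 ` (F - {C0})"
proof (intro equalityI subsetI)
  fix Y assume "Y \<in> DP (var x) F"
  then show "Y \<in> resolve_with x C0 ` (F - {C0})"
  proof (cases rule: DP_memE)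
    case 1
    then have "Y \<noteq> C0" "comp x \<notin> Y"
      using x_in_C0 image_eqI[of "var x" var "comp x" Y] by (auto simp: vars_cl_def)
    with 1 show ?thesis
      by (auto simp: resolve_with_def intro!: image_eqI[where x = Y])
  next
    case (2 C D)
    obtain E where E: "E \<in> F" "comp x \<in> E" "Y = (C0 \<union> E) - {x, comp x}"
    proof (cases x)
      case (Pos v)
      with 2 clause_with_x that show ?thesis
        by (auto simp: Un_commute)
    next
      case (Neg v)
      with 2 clause_with_x that show ?thesis
        by (auto simp: Un_commute)
    qed
    moreover have "E \<noteq> C0" "x \<notin> E"
      using E(1,2) comp_x_notin_C0 clause_with_x by auto
    ultimately have "Y = resolve_with x C0 E"
      using comp_x_notin_C0 by (auto simp: resolve_with_def)
    with E(1) \<open>E \<noteq> C0\<close> show ?thesis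
      by blast
  qed
next
  fix Y assume "Y \<in> resolve_with x C0 ` (F - {C0})"
  then obtain E where E: "E \<in> F" "E \<noteq> C0" "Y = resolve_with x C0 E"
    by blast
  show "Y \<in> DP (var x) F"
  proof (cases "comp x \<in> E")
    case False
    have "var x \<notin> vars_cl E"
      unfolding vars_cl_def using E(1,2) False var_neq_x by force
    with E False show ?thesis
      by (simp add: DP_def resolve_with_def)
  next
    case True
    have "(C0 \<union> E) - {x, comp x} \<in> DP (var x) F"
      using resolvent_in_DP[OF C0_in E(1) x_in_C0 True] no_clash[OF E(1) True] by blast
    moreover have "(C0 \<union> E) - {x, comp x} = Y"
      using E True comp_x_notin_C0 clause_with_x by (auto simp: resolve_with_def)
    ultimately show ?thesis
      by simp
  qed
qed

lemma resolve_with_eq_imp_eq: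
  assumes E: "E \<in> F" "E \<noteq> C0" and E': "E' \<in> F" "comp x \<in> E'"
    and eq: "resolve_with x C0 E = resolve_with x C0 E'"
  shows "E = E'"
proof (rule ccontr)
  assume "E \<noteq> E'"
  obtain a where a: "\<forall>C\<in>F - {E'}. \<exists>m\<in>C. lit_true a m"
    using min_unsat_remove_clause[OF mu E'(1)] .
  have E'_false: "\<not> lit_true a m" if "m \<in> E'" for m
    using min_unsat_remove_clause_falsifies[OF mu E'(1) a that] .
  obtain m where m: "m \<in> E" "lit_true a m"
    using a E(1) \<open>E \<noteq> E'\<close> by blast
  with E'_false E'(2) have "m \<in> resolve_with x C0 E"
    using Diff_comp_subset_resolve_with by fastforce
  with eq E'(2) E'_false m(2) have "m \<in> C0" "m \<noteq> x"
    by (auto simp: resolve_with_def)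
  moreover have "\<exists>n\<in>C. lit_true a n" if "C \<in> F" "C \<noteq> C0" "comp x \<notin> C" for C
    using a E'(2) that by blast
  ultimately show False
    using C0_rest_false m(2) by blast
qed

lemma inj_on_resolve_with: "inj_on (resolve_with x C0) (F - {C0})"
proof (rule inj_onI)
  fix E E' assume E: "E \<in> F - {C0}" and E': "E' \<in> F - {C0}"
    and eq: "resolve_with x C0 E = resolve_with x C0 E'"
  show "E = E'"
  proof (cases "comp x \<in> E'")
    case True
    with E E' eq show ?thesis
      using resolve_with_eq_imp_eq[of E E'] by simp
  next
    case False
    show ?thesis
    proof (cases "comp x \<in> E")
      case True
      with E E' eq have "E' = E"
        using resolve_with_eq_imp_eq[of E' E] by simp
      then show ?thesis ..
    next
      case False
      with \<open>comp x \<notin> E'\<close> eq show ?thesis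
        by (simp add: resolve_with_def)
    qed
  qed
qed

lemma unsat_image: "\<not> satisfiable (resolve_with x C0 ` (F - {C0}))"
proof
  assume "satisfiable (resolve_with x C0 ` (F - {C0}))"
  then obtain a where "\<forall>Y\<in>resolve_with x C0 ` (F - {C0}). \<exists>m\<in>Y. lit_true a m"
    unfolding satisfiable_def ..
  then have a: "\<And>E. E \<in> F \<Longrightarrow> E \<noteq> C0 \<Longrightarrow> \<exists>m\<in>resolve_with x C0 E. lit_true a m"
    by simp
  show False
  proof (cases "\<exists>l\<in>C0 - {x}. lit_true a l")
    case True
    then obtain l where l: "l \<in> C0" "l \<noteq> x" "lit_true a l"
      by blast
    have "\<not> lit_true a l"
    proof (rule C0_rest_false[OF _ l(1,2)])
      fix C assume "C \<in> F" "C \<noteq> C0" "comp x \<notin> C"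
      with a[of C] show "\<exists>m\<in>C. lit_true a m"
        by (simp add: resolve_with_def)
    qed
    with l(3) show False
      by simp
  next
    case False
    have "satisfiable F"
    proof (rule satisfiable_set_literal[of F x a])
      fix C assume C: "C \<in> F" "x \<notin> C"
      then have "C \<noteq> C0"
        using x_in_C0 by blast
      with C a obtain m where m: "m \<in> resolve_with x C0 C" "lit_true a m"
        by blast
      with False have "m \<in> C" "m \<noteq> comp x"
        using resolve_with_subset[of x C0 C] by blast+
      with C(1) \<open>C \<noteq> C0\<close> m(2) show "\<exists>m\<in>C. var m \<noteq> var x \<and> lit_true a m"
        using var_neq_x[of C m] by blast
    qed
    with mu show False
      by (simp add: min_unsat_def)
  qed
qed

lemma min_unsat_image: "min_unsat (resolve_with x C0 ` (F - {C0}))"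
proof -
  have "clause_set (resolve_with x C0 ` (F - {C0}))"
    unfolding clause_set_def using min_unsat_finite[OF mu] clause_resolve_with by auto
  moreover have "satisfiable G" if G: "G \<subset> resolve_with x C0 ` (F - {C0})" for G
  proof -
    obtain Y where "Y \<in> resolve_with x C0 ` (F - {C0})" "Y \<notin> G"
      using psubset_imp_ex_mem[OF G] by blast
    then obtain E where E: "E \<in> F" "E \<noteq> C0" "resolve_with x C0 E \<notin> G"
      by auto
    obtain a where a: "\<forall>C\<in>F - {E}. \<exists>m\<in>C. lit_true a m"
      using min_unsat_remove_clause[OF mu E(1)] .
    have "\<exists>m\<in>Y. lit_true a m" if "Y \<in> G" for Y
    proof -
      have "Y \<in> resolve_with x C0 ` (F - {C0})"
        using G \<open>Y \<in> G\<close> by auto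
      then obtain E' where E': "E' \<in> F" "Y = resolve_with x C0 E'"
        by auto
      with E(3) \<open>Y \<in> G\<close> have "E' \<noteq> E"
        by auto
      with a E' E(2) C0_in have "\<exists>l\<in>C0. lit_true a l" "\<exists>m\<in>E'. lit_true a m"
        by auto
      with E'(2) show ?thesis
        using resolve_with_true by blast
    qed
    then show ?thesis
      unfolding satisfiable_def by blast
  qed
  ultimately show ?thesis
    unfolding min_unsat_def using unsat_image by blast
qed

lemma vars_image: "vars (resolve_with x C0 ` (F - {C0})) = vars F - {var x}"
proof (intro equalityI subsetI)
  fix t assume "t \<in> vars (resolve_with x C0 ` (F - {C0}))"
  then obtain E m where E: "E \<in> F" "E \<noteq> C0" and m: "m \<in> resolve_with x C0 E" "var m = t"
    unfolding mem_vars by blast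
  then have "m \<in> E - {comp x} \<or> m \<in> C0 - {x}"
    using resolve_with_subset by blast
  with E C0_in var_neq_x var_neq_x_in_C0 have "var m \<noteq> var x" "\<exists>C\<in>F. m \<in> C"
    by blast+
  with m(2) show "t \<in> vars F - {var x}"
    by (auto simp: mem_vars)
next
  fix t assume "t \<in> vars F - {var x}"
  then obtain E m where E: "E \<in> F" "m \<in> E" "var m = t" and "t \<noteq> var x"
    by (auto simp: mem_vars)
  then have mx: "m \<noteq> x" "m \<noteq> comp x"
    by auto
  obtain D where D: "D \<in> F" "D \<noteq> C0" "m \<in> resolve_with x C0 D"
  proof (cases "E = C0")
    case True
    obtain D where D: "D \<in> F" "comp x \<in> D"
      using comp_x_occurs by blast
    moreover from D(2) have "D \<noteq> C0"
      using comp_x_notin_C0 by blast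
    moreover from True E(2) mx D(2) have "m \<in> resolve_with x C0 D"
      by (simp add: resolve_with_def)
    ultimately show ?thesis
      using that by blast
  next
    case False
    with E(1,2) mx that show ?thesis
      using Diff_comp_subset_resolve_with by blast
  qed
  with E(3) show "t \<in> vars (resolve_with x C0 ` (F - {C0}))"
    unfolding mem_vars by blast
qed

lemma ldeg_image:
  "ldeg (resolve_with x C0 ` (F - {C0})) z = card {E \<in> F - {C0}. z \<in> resolve_with x C0 E}"
  unfolding ldeg_def Compr_image_eq
  by (rule card_image, rule inj_on_subset[OF inj_on_resolve_with]) auto

lemma ldeg_image_eq:
  assumes "z \<notin> C0" "var z \<noteq> var x"
  shows "ldeg (resolve_with x C0 ` (F - {C0})) z = ldeg F z"
proof -
  have "{E \<in> F - {C0}. z \<in> resolve_with x C0 E} = {E \<in> F. z \<in> E}"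
    using assms by (auto simp: resolve_with_def)
  then show ?thesis
    unfolding ldeg_image by (simp add: ldeg_def)
qed

lemma ldeg_comp_x_le:
  assumes "z \<in> C0" "z \<noteq> x"
  shows "ldeg F (comp x) \<le> ldeg (resolve_with x C0 ` (F - {C0})) z"
proof -
  have "{D \<in> F. comp x \<in> D} \<subseteq> {E \<in> F - {C0}. z \<in> resolve_with x C0 E}"
    using assms comp_x_notin_C0 by (auto simp: resolve_with_def)
  then have "card {D \<in> F. comp x \<in> D} \<le> card {E \<in> F - {C0}. z \<in> resolve_with x C0 E}"
    using min_unsat_finite[OF mu] by (intro card_mono) auto
  then show ?thesis
    unfolding ldeg_image by (simp add: ldeg_def)
qed

lemma min_unsat_DP: "min_unsat (DP (var x) F)"
  using min_unsat_image DP_eq_image by simp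

lemma vars_DP: "vars (DP (var x) F) = vars F - {var x}"
  using vars_image DP_eq_image by simp

lemma singular_DP_if_ldeg_one:
  assumes "z \<notin> C0" "var z \<noteq> var x" "ldeg F z = 1"
  shows "singular (DP (var x) F) (var z)"
  using singular_iff[OF min_unsat_DP] ldeg_image_eq[OF assms(1,2)] assms(3) DP_eq_image by auto

lemma singular_DP_witness:
  assumes u: "singular (DP (var x) F) u" and comp_x: "ldeg F (comp x) \<noteq> 1"
  obtains z where "var z = u" "ldeg F z = 1" "z \<notin> C0"
proof -
  obtain z where z: "var z = u" "ldeg (DP (var x) F) z = 1"
    using u singular_iff[OF min_unsat_DP] by blast
  have "u \<noteq> var x"
    using u vars_DP unfolding singular_def by blast
  with z(1) have "z \<noteq> x" "var z \<noteq> var x"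
    by auto
  have "0 < ldeg F (comp x)"
    using comp_x_occurs ldeg_pos_iff[OF min_unsat_finite[OF mu]] by blast
  with comp_x z(2) have "z \<notin> C0"
    using ldeg_comp_x_le[OF _ \<open>z \<noteq> x\<close>] DP_eq_image by fastforce
  with z \<open>var z \<noteq> var x\<close> that show ?thesis
    using ldeg_image_eq DP_eq_image by auto
qed

end

lemma singular_literalI:
  assumes "min_unsat F" "ldeg F x = 1"
  obtains C0 where "singular_literal F x C0"
proof -
  obtain C where "C \<in> F" "x \<in> C"
    using assms ldeg_pos_iff[OF min_unsat_finite[OF assms(1)], of x] by auto
  with assms that show ?thesis
    unfolding singular_literal_def by blast
qed

lemma singular_literal_of_singular:
  assumes "min_unsat F" "singular F v"
  obtains x C0 where "var x = v" "singular_literal F x C0"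
  using assms singular_iff singular_literalI by metis

lemma min_unsat_DP:
  assumes "min_unsat F" "singular F v"
  shows "min_unsat (DP v F)"
  using singular_literal_of_singular[OF assms] singular_literal.min_unsat_DP by metis

lemma nvars_DP:
  assumes "min_unsat F" "singular F v"
  shows "nvars (DP v F) = nvars F - 1" and "nvars (DP v F) < nvars F"
proof -
  have "vars (DP v F) = vars F - {v}"
    using singular_literal_of_singular[OF assms] singular_literal.vars_DP by metis
  moreover have "v \<in> vars F" "finite (vars F)"
    using assms finite_vars unfolding singular_def min_unsat_def by auto
  ultimately show eq: "nvars (DP v F) = nvars F - 1"
    unfolding nvars_def by simp
  have "0 < nvars F"
    unfolding nvars_def using \<open>v \<in> vars F\<close> \<open>finite (vars F)\<close> card_gt_0_iff by blast
  with eq show "nvars (DP v F) < nvars F"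
    by simp
qed

section \<open>Commuting singular DP-steps\<close>

lemma resolve_with_commute:
  assumes "x \<in> C0" "z \<in> Z0" "comp x \<notin> C0" "comp z \<notin> Z0" "z \<notin> C0" "x \<notin> Z0"
    "var x \<noteq> var z" "\<not> (comp z \<in> C0 \<and> comp x \<in> Z0)"
  shows "resolve_with z (resolve_with x C0 Z0) (resolve_with x C0 E)
    = resolve_with x (resolve_with z Z0 C0) (resolve_with z Z0 E)"
proof -
  have "x \<noteq> z" "x \<noteq> comp z" "comp x \<noteq> z" "comp x \<noteq> comp z"
    using assms(7) by (metis var_comp)+
  with assms show ?thesis
    unfolding resolve_with_def by (auto split: if_splits)
qed

context
  fixes F :: "'v cls" and x z :: "'v lit" and C0 Z0 :: "'v clause"
  assumes X: "singular_literal F x C0" and Z: "singular_literal F z Z0"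
    and C0_Z0: "C0 \<noteq> Z0" and var_x_z: "var x \<noteq> var z"
begin

interpretation X: singular_literal F x C0
  by (fact X)

interpretation Z: singular_literal F z Z0
  by (fact Z)

lemma z_notin_C0: "z \<notin> C0"
  using Z.clause_with_x X.C0_in C0_Z0 by blast

lemma singular_DP_var_z: "singular (DP (var x) F) (var z)"
  using X.singular_DP_if_ldeg_one[OF z_notin_C0 var_x_z[symmetric] Z.ldeg_x] .

lemma DP_DP_eq_image:
  "DP (var z) (DP (var x) F)
    = (\<lambda>E. resolve_with z (resolve_with x C0 Z0) (resolve_with x C0 E)) ` (F - {C0, Z0})"
proof -
  have Z0_in: "Z0 \<in> F - {C0}"
    using Z.C0_in C0_Z0 by blast
  have "ldeg (resolve_with x C0 ` (F - {C0})) z = 1"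
    using X.ldeg_image_eq[OF z_notin_C0] var_x_z Z.ldeg_x by simp
  moreover have "z \<in> resolve_with x C0 Z0"
    using Z.x_in_C0 var_x_z Diff_comp_subset_resolve_with by fastforce
  ultimately interpret Z1: singular_literal "resolve_with x C0 ` (F - {C0})" z "resolve_with x C0 Z0"
    using X.min_unsat_image Z0_in by unfold_locales auto
  have "DP (var z) (DP (var x) F)
      = resolve_with z (resolve_with x C0 Z0) ` (resolve_with x C0 ` (F - {C0}) - {resolve_with x C0 Z0})"
    using X.DP_eq_image Z1.DP_eq_image by simp
  also have "resolve_with x C0 ` (F - {C0}) - {resolve_with x C0 Z0} = resolve_with x C0 ` (F - {C0} - {Z0})"
    using inj_on_image_set_diff[OF X.inj_on_resolve_with, of "F - {C0}" "{Z0}"] Z0_in by simp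
  also have "F - {C0} - {Z0} = F - {C0, Z0}"
    by blast
  finally show ?thesis
    by (simp add: image_image)
qed

end

lemma DP_commute:
  assumes X: "singular_literal F x C0" and Z: "singular_literal F z Z0"
    and C0_Z0: "C0 \<noteq> Z0" and var_x_z: "var x \<noteq> var z"
  shows "DP (var z) (DP (var x) F) = DP (var x) (DP (var z) F)"
proof -
  interpret X: singular_literal F x C0 by fact
  interpret Z: singular_literal F z Z0 by fact
  have "comp z \<noteq> x"
    using var_x_z by auto
  then have "\<not> (comp z \<in> C0 \<and> comp x \<in> Z0)"
    using X.no_clash[OF Z.C0_in, of "comp z"] Z.x_in_C0 by auto
  then have commute: "resolve_with z (resolve_with x C0 Z0) (resolve_with x C0 E)
      = resolve_with x (resolve_with z Z0 C0) (resolve_with z Z0 E)" for E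
    using resolve_with_commute[OF X.x_in_C0 Z.x_in_C0 X.comp_x_notin_C0 Z.comp_x_notin_C0
        z_notin_C0[OF X Z C0_Z0 var_x_z] z_notin_C0[OF Z X C0_Z0[symmetric] var_x_z[symmetric]] var_x_z]
    by blast
  have "DP (var z) (DP (var x) F)
      = (\<lambda>E. resolve_with z (resolve_with x C0 Z0) (resolve_with x C0 E)) ` (F - {C0, Z0})"
    using DP_DP_eq_image[OF X Z C0_Z0 var_x_z] .
  also have "\<dots> = (\<lambda>E. resolve_with x (resolve_with z Z0 C0) (resolve_with z Z0 E)) ` (F - {Z0, C0})"
    using commute by (simp add: insert_commute)
  also have "\<dots> = DP (var x) (DP (var z) F)"
    using DP_DP_eq_image[OF Z X C0_Z0[symmetric] var_x_z[symmetric]] by simp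
  finally show ?thesis .
qed

lemma sDP_step_diamond:
  assumes X: "singular_literal F x C0" and Z: "singular_literal F z Z0"
    and "C0 \<noteq> Z0" "var x \<noteq> var z"
  shows "sDP_step (DP (var x) F) (DP (var z) (DP (var x) F))"
    and "sDP_step (DP (var z) F) (DP (var z) (DP (var x) F))"
  using assms singular_DP_var_z singular_DP_var_z[OF Z X] DP_commute
    singular_literal.min_unsat_DP unfolding sDP_step_def by metis+

lemma singular_peak_cases:
  assumes mu: "min_unsat F" and v: "singular F v" and w: "singular F w" and "v \<noteq> w"
  obtains (joinable) H where "sDP_step (DP v F) H" "sDP_step (DP w F) H"
    | (nonsingular) "nonsingular (DP v F)" "nonsingular (DP w F)"
    | (detour) u H1 H2 where "singular F u"
        "sDP_step (DP v F) H1" "sDP_step (DP u F) H1" "sDP_step (DP w F) H2" "sDP_step (DP u F) H2"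
proof (cases "\<exists>x y C0 E0. var x = v \<and> var y = w \<and> singular_literal F x C0 \<and> singular_literal F y E0 \<and> C0 \<noteq> E0")
  case True
  then obtain x y C0 E0 where x: "var x = v" and y: "var y = w" and X: "singular_literal F x C0"
      and Y: "singular_literal F y E0" and "C0 \<noteq> E0"
    by blast
  with \<open>v \<noteq> w\<close> have "sDP_step (DP v F) (DP w (DP v F))" "sDP_step (DP w F) (DP w (DP v F))"
    using sDP_step_diamond[OF X Y] by auto
  then show ?thesis
    by (rule joinable)
next
  case False
  then have same_clause: "C0 = E0"
    if "var x = v" "var y = w" "singular_literal F x C0" "singular_literal F y E0" for x y C0 E0
    using that by blast
  obtain x C0 where x: "var x = v" and X: "singular_literal F x C0"
    using singular_literal_of_singular[OF mu v] .
  have in_C0: "z \<in> C0" if z_var: "var z = v \<or> var z = w" and z_deg: "ldeg F z = 1" for z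
  proof -
    obtain y E0 where y: "var y = w" and Y: "singular_literal F y E0"
      using singular_literal_of_singular[OF mu w] .
    obtain Z0 where Z: "singular_literal F z Z0"
      using singular_literalI[OF mu z_deg] .
    have "C0 = E0"
      using same_clause[OF x y X Y] .
    with z_var have "Z0 = C0"
      using same_clause[OF _ y Z Y] same_clause[OF x _ X Z] by auto
    with Z show ?thesis
      using singular_literal.x_in_C0 by blast
  qed
  obtain y where y: "var y = w" and Y: "singular_literal F y C0"
  proof -
    obtain y E0 where y: "var y = w" and Y: "singular_literal F y E0"
      using singular_literal_of_singular[OF mu w] .
    then have "y \<in> C0"
      using in_C0 singular_literal.ldeg_x by blast
    with X Y have "singular_literal F y C0"
      unfolding singular_literal_def by blast
    with y show ?thesis
      by (rule that)
  qed
  interpret X: singular_literal F x C0 by (fact X)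
  interpret Y: singular_literal F y C0 by (fact Y)
  have "ldeg F (comp x) \<noteq> 1" "ldeg F (comp y) \<noteq> 1"
    using in_C0 x y X.comp_x_notin_C0 Y.comp_x_notin_C0 by auto
  show ?thesis
  proof (cases "nonsingular (DP v F) \<and> nonsingular (DP w F)")
    case True
    with nonsingular show ?thesis
      by blast
  next
    case False
    then obtain u where "singular (DP (var x) F) u \<or> singular (DP (var y) F) u"
      unfolding nonsingular_def x y by blast
    then obtain z where z: "var z = u" "ldeg F z = 1" "z \<notin> C0"
      using X.singular_DP_witness[OF _ \<open>ldeg F (comp x) \<noteq> 1\<close>]
        Y.singular_DP_witness[OF _ \<open>ldeg F (comp y) \<noteq> 1\<close>] by blast
    obtain Z0 where Z: "singular_literal F z Z0"
      using singular_literalI[OF mu z(2)] .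
    have "C0 \<noteq> Z0"
      using z(3) singular_literal.x_in_C0[OF Z] by blast
    moreover have "var x \<noteq> var z" "var y \<noteq> var z"
      using z(2,3) in_C0 x y by auto
    moreover have "singular F u"
      using singular_iff[OF mu] z by blast
    ultimately show ?thesis
      using detour sDP_step_diamond[OF X Z] sDP_step_diamond[OF Y Z] x y z(1) by blast
  qed
qed

lemma sDP_step_min_unsat:
  assumes "sDP_step F G"
  shows "min_unsat G"
proof -
  obtain v where "min_unsat F" "singular F v" "G = DP v F"
    using assms unfolding sDP_step_def by blast
  then show ?thesis
    using min_unsat_DP by simp
qed

lemma sDP_steps_min_unsat: "sDP_step\<^sup>*\<^sup>* F G \<Longrightarrow> min_unsat F \<Longrightarrow> min_unsat G"
  by (induction rule: rtranclp_induct) (auto intro: sDP_step_min_unsat)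

lemma sDP_steps_sDP_subset: "sDP_step\<^sup>*\<^sup>* F H \<Longrightarrow> sDP H \<subseteq> sDP F"
  unfolding sDP_def by (auto intro: rtranclp_trans)

lemma sDP_of_nonsingular: "nonsingular F \<Longrightarrow> G \<in> sDP F \<Longrightarrow> G = F"
  unfolding sDP_def by (auto elim: converse_rtranclpE simp: sDP_step_def nonsingular_def)

lemma sDP_first_step:
  assumes "G \<in> sDP F" "\<not> nonsingular F"
  obtains v where "singular F v" "G \<in> sDP (DP v F)"
proof -
  have steps: "sDP_step\<^sup>*\<^sup>* F G" and G: "nonsingular G" "min_unsat G"
    using assms(1) unfolding sDP_def by auto
  from steps obtain F1 where "sDP_step F F1" "sDP_step\<^sup>*\<^sup>* F1 G"
    using assms(2) G(1) by (metis converse_rtranclpE)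
  with G that show ?thesis
    unfolding sDP_step_def sDP_def by blast
qed

lemma sDP_nonempty: "min_unsat F \<Longrightarrow> sDP F \<noteq> {}"
proof (induction "nvars F" arbitrary: F rule: less_induct)
  case less
  show ?case
  proof (cases "nonsingular F")
    case True
    with less.prems show ?thesis
      unfolding sDP_def by blast
  next
    case False
    then obtain v where v: "singular F v"
      unfolding nonsingular_def by blast
    then have "sDP_step\<^sup>*\<^sup>* F (DP v F)"
      using less.prems unfolding sDP_step_def by blast
    with less.hyps[OF nvars_DP(2)[OF less.prems v] min_unsat_DP[OF less.prems v]] show ?thesis
      using sDP_steps_sDP_subset by blast
  qed
qed

definition unique_nvars_sDP :: "'v cls \<Rightarrow> bool" where
  "unique_nvars_sDP F \<longleftrightarrow> (\<forall>G\<in>sDP F. \<forall>G'\<in>sDP F. nvars G = nvars G')"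

lemma nvars_eq_if_common_reduct:
  assumes "unique_nvars_sDP F1" "unique_nvars_sDP F2" "min_unsat F1"
    and "sDP_step\<^sup>*\<^sup>* F1 H" "sDP_step\<^sup>*\<^sup>* F2 H" and "G1 \<in> sDP F1" "G2 \<in> sDP F2"
  shows "nvars G1 = nvars G2"
proof -
  obtain G where "G \<in> sDP H"
    using sDP_nonempty[OF sDP_steps_min_unsat[OF assms(4,3)]] by blast
  with assms show ?thesis
    unfolding unique_nvars_sDP_def using sDP_steps_sDP_subset by (metis subsetD)
qed

lemma unique_nvars_sDP_if_reducts:
  assumes mu: "min_unsat F" and reducts: "\<And>u. singular F u \<Longrightarrow> unique_nvars_sDP (DP u F)"
  shows "unique_nvars_sDP F"
  unfolding unique_nvars_sDP_def
proof (intro ballI)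
  fix G1 G2 assume G1: "G1 \<in> sDP F" and G2: "G2 \<in> sDP F"
  show "nvars G1 = nvars G2"
  proof (cases "nonsingular F")
    case True
    with G1 G2 show ?thesis
      using sDP_of_nonsingular by blast
  next
    case False
    obtain v where v: "singular F v" and G1': "G1 \<in> sDP (DP v F)"
      using sDP_first_step[OF G1 False] .
    obtain w where w: "singular F w" and G2': "G2 \<in> sDP (DP w F)"
      using sDP_first_step[OF G2 False] .
    have common_reduct: "nvars G = nvars G'"
      if "singular F s" "singular F t" "sDP_step (DP s F) H" "sDP_step (DP t F) H"
        "G \<in> sDP (DP s F)" "G' \<in> sDP (DP t F)" for s t H G G'
      using nvars_eq_if_common_reduct[OF reducts reducts min_unsat_DP[OF mu]] that by blast
    show ?thesis
    proof (cases "v = w")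
      case True
      with reducts v G1' G2' show ?thesis
        unfolding unique_nvars_sDP_def by blast
    next
      case False
      with mu v w show ?thesis
      proof (cases rule: singular_peak_cases)
        case (joinable H)
        show ?thesis
          using common_reduct[OF v w joinable G1' G2'] .
      next
        case nonsingular
        then have "G1 = DP v F" "G2 = DP w F"
          using G1' G2' sDP_of_nonsingular by blast+
        then show ?thesis
          using nvars_DP(1)[OF mu v] nvars_DP(1)[OF mu w] by simp
      next
        case (detour u H1 H2)
        obtain G3 where G3: "G3 \<in> sDP (DP u F)"
          using sDP_nonempty[OF min_unsat_DP[OF mu detour(1)]] by blast
        have "nvars G1 = nvars G3"
          using common_reduct[OF v detour(1) detour(2,3) G1' G3] .
        also have "\<dots> = nvars G2"
          using common_reduct[OF detour(1) w detour(5,4) G3 G2'] .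
        finally show ?thesis .
      qed
    qed
  qed
qed

lemma unique_nvars_sDP: "min_unsat F \<Longrightarrow> unique_nvars_sDP F"
proof (induction "nvars F" arbitrary: F rule: less_induct)
  case less
  show ?case
  proof (rule unique_nvars_sDP_if_reducts[OF less.prems])
    fix u assume u: "singular F u"
    show "unique_nvars_sDP (DP u F)"
      using less.hyps[OF nvars_DP(2)[OF less.prems u] min_unsat_DP[OF less.prems u]] .
  qed
qed

theorem corollary64:
  fixes F F' F'' :: "'v cls"
  assumes "min_unsat F"
    and "F' \<in> sDP F" and "F'' \<in> sDP F"
  shows "nvars F' = nvars F''"
  using unique_nvars_sDP[OF assms(1)] assms(2,3) unfolding unique_nvars_sDP_def by blast

end
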